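(* Let $\mathcal{D}$ be $(\alpha,\beta)$-PDF-bounded with mean $\mu\in(0,1)$, let $C\ge1$ and $\varepsilon\in(0,1)$ be constants, let the weights satisfy $w_{\max}/w_{\min}\le C$, and let $(1+\varepsilon)\frac{n}{1-\mu}\le m=O(n\log n)$. Set $\tau=1-\frac{8(C+1)\log m}{\alpha n}$, $\delta=\left(1+\frac{\varepsilon}{1+\varepsilon}\cdot\frac{1-\mu}{\mu}\right)\tau-1$, and $s_i=\left\lceil(1+\delta)\frac{w_i}{W}\cdot\frac{\mu m}{\tau}\right\rceil$ for $i\in N$, $\mathbf{s}=(s_1,\ldots,s_n)$. Let $G_{\ge\tau}$ be the bipartite graph with parts $N$ and $M$ in which $(i,g)$ is an edge iff $u_i(g)\ge\tau$, where the utilities $u_i(g)$ are drawn independently from $\mathcal{D}$. Then, with high probability (as $n\to\infty$), $G_{\ge\tau}$ contains a left-saturating $\mathbf{s}$-matching (so the matching-based algorithm outputs one).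
   Context: Agents $N=[n]$ with positive weights $w_i$, $W=\sum_iw_i$; items $M=[m]$. $(\alpha,\beta)$-PDF-bounded: non-atomic with density in $[\alpha,\beta]$ on $[0,1]$; $\log$ is natural. For a bipartite graph $(L\cup R,E)$ with $|L|=n$ and positive integers $\mathbf{s}$ with $\sum s_i\le |R|$, an $\mathbf{s}$-matching is a set $F\subseteq E$ such that each $i\in L$ is incident to at most $s_i$ edges of $F$ and each vertex of $R$ to at most one; it is left-saturating if each $i\in L$ is incident to exactly $s_i$ edges of $F$. *)

theory Defs
  imports "HOL-Probability.Probability"
begin

definition s_matching :: "('a \<times> 'b) set \<Rightarrow> 'a set \<Rightarrow> 'b set \<Rightarrow> ('a \<Rightarrow> nat) \<Rightarrow> ('a \<times> 'b) set \<Rightarrow> bool" where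
  "s_matching E L R s F \<longleftrightarrow>
     F \<subseteq> E \<and> (\<forall>i\<in>L. card {g. (i, g) \<in> F} \<le> s i) \<and> (\<forall>g\<in>R. card {i. (i, g) \<in> F} \<le> 1)"

definition left_saturating_s_matching ::
  "('a \<times> 'b) set \<Rightarrow> 'a set \<Rightarrow> 'b set \<Rightarrow> ('a \<Rightarrow> nat) \<Rightarrow> ('a \<times> 'b) set \<Rightarrow> bool" where
  "left_saturating_s_matching E L R s F \<longleftrightarrow>
     s_matching E L R s F \<and> (\<forall>i\<in>L. card {g. (i, g) \<in> F} = s i)"

definition threshold_graph :: "nat \<Rightarrow> nat \<Rightarrow> (nat \<times> nat \<Rightarrow> real) \<Rightarrow> real \<Rightarrow> (nat \<times> nat) set" where
  "threshold_graph n m u t = {(i, g). i < n \<and> g < m \<and> u (i, g) \<ge> t}"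

definition tau_param :: "real \<Rightarrow> real \<Rightarrow> nat \<Rightarrow> nat \<Rightarrow> real" where
  "tau_param \<alpha> C n m = 1 - 8 * (C + 1) * ln (real m) / (\<alpha> * real n)"

definition delta_param :: "real \<Rightarrow> real \<Rightarrow> real \<Rightarrow> real" where
  "delta_param \<epsilon> \<mu> t = (1 + \<epsilon> / (1 + \<epsilon>) * ((1 - \<mu>) / \<mu>)) * t - 1"

definition s_param :: "real \<Rightarrow> real \<Rightarrow> real \<Rightarrow> real \<Rightarrow> nat \<Rightarrow> nat \<Rightarrow> (nat \<Rightarrow> real) \<Rightarrow> nat \<Rightarrow> nat" where
  "s_param \<alpha> C \<epsilon> \<mu> n m w i =
     (let t = tau_param \<alpha> C n m; d = delta_param \<epsilon> \<mu> t; W = (\<Sum>j<n. w j)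
      in nat \<lceil>(1 + d) * (w i / W) * (\<mu> * real m / t)\<rceil>)"

end

theory Submission
  imports Defs "HOL-Real_Asymp.Real_Asymp"
begin

text \<open>
  Call a pair (S, T) of a set S of agents and a set T of items an obstruction if no edge of the
  threshold graph joins S to T and |T| + (\<Sum>i\<in>S. s i) > m. By Hall's theorem for s-matchings,
  a left-saturating s-matching exists unless there is an obstruction. Edges are present
  independently, each with probability at least \<alpha>(1 - \<tau>) = 8(C + 1) ln m / n, so a fixed pair
  with |S| = k and |T| = t is an obstruction with probability at most m powr (-8(C + 1)kt/n).
  The choice of s gives 1 \<le> s i \<le> Cm/n + 1 and (\<Sum>i. s i) \<le> m, which forces k + t > n and
  m - t < k(Cm/n + 1); this makes the probability at most 1 / (m^3 (n choose k) (m choose t)),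
  so the union bound over all pairs bounds the failure probability by (n + 1)(m + 1)/m^3 \<le> 4/n.
\<close>

section \<open>Hall's theorem for s-matchings\<close>

definition nbhd :: "('a \<times> 'b) set \<Rightarrow> 'b set \<Rightarrow> 'a set \<Rightarrow> 'b set" where
  "nbhd E R S = {g \<in> R. \<exists>i\<in>S. (i, g) \<in> E}"

definition s_hall_condition :: "('a \<times> 'b) set \<Rightarrow> 'a set \<Rightarrow> 'b set \<Rightarrow> ('a \<Rightarrow> nat) \<Rightarrow> bool" where
  "s_hall_condition E L R s \<longleftrightarrow> (\<forall>S\<subseteq>L. sum s S \<le> card (nbhd E R S))"

lemma nbhd_subset: "nbhd E R S \<subseteq> R"
  by (auto simp: nbhd_def)

lemma finite_nbhd [simp]: "finite R \<Longrightarrow> finite (nbhd E R S)"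
  by (simp add: nbhd_def)

lemma s_hall_condition_tight_part:
  assumes "s_hall_condition E L R s" "S \<subseteq> L"
  shows "s_hall_condition E S (nbhd E R S) s"
proof -
  have "nbhd E (nbhd E R S) S' = nbhd E R S'" if "S' \<subseteq> S" for S'
    using that by (auto simp: nbhd_def)
  then show ?thesis
    using assms by (auto simp: s_hall_condition_def)
qed

lemma s_hall_condition_tight_rest:
  assumes hall: "s_hall_condition E L R s" and fin: "finite L" "finite R"
    and S: "S \<subseteq> L" and tight: "card (nbhd E R S) \<le> sum s S"
  shows "s_hall_condition E (L - S) (R - nbhd E R S) s"
  unfolding s_hall_condition_def
proof (intro allI impI)
  fix S' assume S': "S' \<subseteq> L - S"
  have "nbhd E (R - nbhd E R S) S' = nbhd E R (S \<union> S') - nbhd E R S"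
    by (auto simp: nbhd_def)
  also have "card \<dots> = card (nbhd E R (S \<union> S')) - card (nbhd E R S)"
    using fin by (intro card_Diff_subset) (auto simp: nbhd_def)
  finally have "card (nbhd E (R - nbhd E R S) S') = card (nbhd E R (S \<union> S')) - card (nbhd E R S)" .
  moreover have "sum s (S \<union> S') = sum s S + sum s S'"
    using S S' fin by (intro sum.union_disjoint) (auto dest: finite_subset)
  moreover have "S \<union> S' \<subseteq> L"
    using S S' by auto
  then have "sum s (S \<union> S') \<le> card (nbhd E R (S \<union> S'))"
    using hall by (simp add: s_hall_condition_def)
  ultimately show "sum s S' \<le> card (nbhd E (R - nbhd E R S) S')"
    using tight by linarith
qed

lemma sum_fun_upd_decr:
  fixes s :: "'a \<Rightarrow> nat"
  assumes "finite S" "0 < s i"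
  shows "sum (s(i := s i - 1)) S = (if i \<in> S then sum s S - 1 else sum s S)"
proof (cases "i \<in> S")
  case True
  have "sum (s(i := s i - 1)) S = (s i - 1) + sum s (S - {i})"
    using True assms(1) by (simp add: sum.remove)
  moreover have "sum s S = s i + sum s (S - {i})"
    using True assms(1) by (simp add: sum.remove)
  ultimately have "sum (s(i := s i - 1)) S = sum s S - 1"
    using assms(2) by simp
  with True show ?thesis
    by simp
qed (auto intro: sum.cong)

lemma s_hall_condition_remove_vertex:
  assumes hall: "s_hall_condition E L R s" and fin: "finite L" "finite R"
    and slack: "\<And>S. S \<subseteq> L \<Longrightarrow> S \<noteq> {} \<Longrightarrow> S \<noteq> L \<Longrightarrow> sum s S < card (nbhd E R S)"
    and i: "i \<in> L" "0 < s i"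
  shows "s_hall_condition E L (R - {g}) (s(i := s i - 1))"
  unfolding s_hall_condition_def
proof (intro allI impI)
  fix S assume S: "S \<subseteq> L"
  have "nbhd E (R - {g}) S = nbhd E R S - {g}"
    by (auto simp: nbhd_def)
  then have card_nbhd: "card (nbhd E R S) - 1 \<le> card (nbhd E (R - {g}) S)"
    by (simp add: card_Diff_singleton_if)
  have hallS: "sum s S \<le> card (nbhd E R S)"
    using hall S by (simp add: s_hall_condition_def)
  have sum_upd: "sum (s(i := s i - 1)) S = (if i \<in> S then sum s S - 1 else sum s S)"
    using S fin i(2) by (intro sum_fun_upd_decr) (auto dest: finite_subset)
  show "sum (s(i := s i - 1)) S \<le> card (nbhd E (R - {g}) S)"
  proof (cases "i \<in> S \<or> S = {}")
    case True
    then show ?thesis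
      using sum_upd card_nbhd hallS by auto
  next
    case False
    then have "sum s S < card (nbhd E R S)"
      using slack S i(1) by blast
    then show ?thesis
      using sum_upd card_nbhd False by simp
  qed
qed

lemma left_saturating_s_matching_Un:
  assumes F1: "left_saturating_s_matching E L1 R1 s F1" "F1 \<subseteq> L1 \<times> R1"
    and F2: "left_saturating_s_matching E L2 R2 s F2" "F2 \<subseteq> L2 \<times> R2"
    and disj: "L1 \<inter> L2 = {}" "R1 \<inter> R2 = {}"
  shows "left_saturating_s_matching E (L1 \<union> L2) (R1 \<union> R2) s (F1 \<union> F2)"
proof -
  have left: "{g. (i, g) \<in> F1 \<union> F2} = (if i \<in> L1 then {g. (i, g) \<in> F1} else {g. (i, g) \<in> F2})" for i
    using F1(2) F2(2) disj(1) by auto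
  have right: "{i. (i, g) \<in> F1 \<union> F2} = (if g \<in> R1 then {i. (i, g) \<in> F1} else {i. (i, g) \<in> F2})"
    for g
    using F1(2) F2(2) disj(2) by auto
  show ?thesis
    using F1(1) F2(1) disj(1)
    unfolding left_saturating_s_matching_def s_matching_def left right by auto
qed

lemma left_saturating_s_matching_insert:
  assumes F: "left_saturating_s_matching E L (R - {g}) (s(i := s i - 1)) F" "F \<subseteq> L \<times> (R - {g})"
    and i: "i \<in> L" "0 < s i" and g: "(i, g) \<in> E" "g \<in> R" and fin: "finite R"
  shows "left_saturating_s_matching E L R s (insert (i, g) F)"
proof -
  have "{g'. (i, g') \<in> insert (i, g) F} = insert g {g'. (i, g') \<in> F}"
    by auto
  moreover have "finite {g'. (i, g') \<in> F}"
    using F(2) fin by (auto intro: finite_subset)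
  moreover have "g \<notin> {g'. (i, g') \<in> F}"
    using F(2) by auto
  ultimately have "card {g'. (i, g') \<in> insert (i, g) F} = Suc (card {g'. (i, g') \<in> F})"
    by simp
  then have left: "card {g'. (j, g') \<in> insert (i, g) F} = s j" if "j \<in> L" for j
    using F(1) that i(2) by (cases "j = i") (auto simp: left_saturating_s_matching_def)
  have "{j. (j, g) \<in> insert (i, g) F} = {i}"
    using F(2) by auto
  then have right: "card {j. (j, g') \<in> insert (i, g) F} \<le> 1" if "g' \<in> R" for g'
    using F(1) that by (cases "g' = g") (auto simp: left_saturating_s_matching_def s_matching_def)
  show ?thesis
    using F(1) g left right by (auto simp: left_saturating_s_matching_def s_matching_def)
qed

lemma sum_plus_card_psubset_less:
  fixes s :: "'a \<Rightarrow> nat"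
  assumes "finite L" "S \<subset> L"
  shows "sum s S + card S < sum s L + card L"
proof -
  have "card S < card L"
    using assms by (rule psubset_card_mono)
  moreover have "sum s S \<le> sum s L"
    using assms by (intro sum_mono2) auto
  ultimately show ?thesis
    by linarith
qed

lemma s_hall_cases:
  assumes "s_hall_condition E L R s" "finite R"
  obtains (zero) "\<forall>i\<in>L. s i = 0"
    | (tight) S where "S \<subseteq> L" "S \<noteq> {}" "S \<noteq> L" "card (nbhd E R S) \<le> sum s S"
    | (slack) i g where "i \<in> L" "0 < s i" "g \<in> R" "(i, g) \<in> E"
        "\<And>S. S \<subseteq> L \<Longrightarrow> S \<noteq> {} \<Longrightarrow> S \<noteq> L \<Longrightarrow> sum s S < card (nbhd E R S)"
proof (cases "\<exists>S. S \<subseteq> L \<and> S \<noteq> {} \<and> S \<noteq> L \<and> card (nbhd E R S) \<le> sum s S")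
  case no_tight: False
  show thesis
  proof (cases "\<forall>i\<in>L. s i = 0")
    case False
    then obtain i where i: "i \<in> L" "0 < s i"
      by auto
    then have "sum s {i} \<le> card (nbhd E R {i})"
      using assms(1) unfolding s_hall_condition_def by (metis empty_subsetI insert_subset)
    then have "0 < card (nbhd E R {i})"
      using i(2) by simp
    then obtain g where g: "g \<in> R" "(i, g) \<in> E"
      by (auto simp: nbhd_def card_gt_0_iff)
    show thesis
      using no_tight by (intro slack[OF i g]) (meson not_le)
  qed (rule zero)
qed (use tight in blast)

text \<open>Halmos and Vaughan's induction: if some proper subset S is tight, match S into its
  neighbourhood and L - S into the rest independently; otherwise every proper subset has slack,
  and any edge (i, g) can be put into the matching.\<close>

theorem s_hall_condition_imp_left_saturating_s_matching:
  assumes "finite L" "finite R" "s_hall_condition E L R s"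
  shows "\<exists>F \<subseteq> L \<times> R. left_saturating_s_matching E L R s F"
  using assms
proof (induction "sum s L + card L" arbitrary: L R s rule: less_induct)
  case less
  note fin = less.prems(1,2) and hall = less.prems(3)
  show ?case
  proof (cases rule: s_hall_cases[OF hall fin(2), case_names zero tight slack])
    case zero
    then have "left_saturating_s_matching E L R s {}"
      by (simp add: left_saturating_s_matching_def s_matching_def)
    then show ?thesis
      by blast
  next
    case (tight S)
    have "S \<subset> L" "L - S \<subset> L"
      using tight(1-3) by auto
    from less.hyps[OF sum_plus_card_psubset_less[OF fin(1) this(1)] finite_subset[OF tight(1) fin(1)]
        finite_nbhd[OF fin(2)] s_hall_condition_tight_part[OF hall tight(1)]]
    obtain F1 where F1: "F1 \<subseteq> S \<times> nbhd E R S" "left_saturating_s_matching E S (nbhd E R S) s F1"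
      by blast
    from less.hyps[OF sum_plus_card_psubset_less[OF fin(1) \<open>L - S \<subset> L\<close>] finite_Diff[OF fin(1)]
        finite_Diff[OF fin(2)] s_hall_condition_tight_rest[OF hall fin tight(1,4)]]
    obtain F2 where F2: "F2 \<subseteq> (L - S) \<times> (R - nbhd E R S)"
        "left_saturating_s_matching E (L - S) (R - nbhd E R S) s F2"
      by blast
    have "left_saturating_s_matching E L R s (F1 \<union> F2)"
      using left_saturating_s_matching_Un[OF F1(2,1) F2(2,1)] tight(1) nbhd_subset[of E R S]
      by (simp add: Un_absorb1)
    moreover have "F1 \<union> F2 \<subseteq> L \<times> R"
      using F1(1) F2(1) tight(1) nbhd_subset[of E R S] by blast
    ultimately show ?thesis
      by blast
  next
    case (slack i g)
    have "s i \<le> sum s L"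
      using fin(1) slack(1) by (intro member_le_sum) auto
    then have "sum (s(i := s i - 1)) L + card L < sum s L + card L"
      using sum_fun_upd_decr[OF fin(1), of s i] slack(1,2) by (simp del: fun_upd_apply)
    from less.hyps[OF this fin(1) finite_Diff[OF fin(2)]
        s_hall_condition_remove_vertex[OF hall fin slack(5) slack(1,2)]]
    obtain F where F: "F \<subseteq> L \<times> (R - {g})"
        "left_saturating_s_matching E L (R - {g}) (s(i := s i - 1)) F"
      by blast
    then have "left_saturating_s_matching E L R s (insert (i, g) F)"
      using slack(1-4) fin(2) by (intro left_saturating_s_matching_insert) auto
    moreover have "insert (i, g) F \<subseteq> L \<times> R"
      using F(1) slack(1,3) by auto
    ultimately show ?thesis
      by blast
  qed
qed

lemma obstruction_of_not_left_saturating_s_matching: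
  assumes "finite L" "finite R" "\<nexists>F. left_saturating_s_matching E L R s F"
  obtains S T where "S \<subseteq> L" "T \<subseteq> R" "card R < card T + sum s S" "\<forall>i\<in>S. \<forall>g\<in>T. (i, g) \<notin> E"
proof -
  have "\<not> s_hall_condition E L R s"
    using assms s_hall_condition_imp_left_saturating_s_matching by blast
  then obtain S where S: "S \<subseteq> L" "card (nbhd E R S) < sum s S"
    by (auto simp: s_hall_condition_def not_le)
  have "card (R - nbhd E R S) = card R - card (nbhd E R S)"
    by (rule card_Diff_subset) (use assms(2) in \<open>auto simp: nbhd_def\<close>)
  moreover have "card (nbhd E R S) \<le> card R"
    using assms(2) by (intro card_mono) (auto simp: nbhd_def)
  ultimately have "card R < card (R - nbhd E R S) + sum s S"
    using S(2) by linarith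
  moreover have "\<forall>i\<in>S. \<forall>g\<in>R - nbhd E R S. (i, g) \<notin> E"
    by (auto simp: nbhd_def)
  ultimately show ?thesis
    using that S(1) by blast
qed

section \<open>Counting obstructions\<close>

lemma sum_Pow_inverse_binomial:
  assumes "finite A"
  shows "(\<Sum>S\<in>Pow A. 1 / real (card A choose card S)) = real (card A) + 1"
proof -
  have "(\<Sum>S\<in>Pow A. 1 / real (card A choose card S)) =
        (\<Sum>k\<in>{0..card A}. \<Sum>S\<in>{S\<in>Pow A. card S = k}. 1 / real (card A choose card S))"
    by (rule sum.group[symmetric]) (use assms in \<open>auto simp: card_mono\<close>)
  also have "\<dots> = (\<Sum>k\<in>{0..card A}. 1)"
  proof (intro sum.cong refl)
    fix k assume "k \<in> {0..card A}"
    then have "card {S. S \<subseteq> A \<and> card S = k} = card A choose k" "0 < card A choose k"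
      using n_subsets[OF assms] by auto
    then show "(\<Sum>S\<in>{S\<in>Pow A. card S = k}. 1 / real (card A choose card S)) = 1"
      by simp
  qed
  finally show ?thesis
    by simp
qed

lemma binomial_le_power:
  fixes n k m a :: nat
  assumes "k \<le> n" "n \<le> m" "a \<in> {k, n - k}"
  shows "n choose k \<le> m ^ a"
proof -
  have "n choose k = n choose a"
    using assms(3) binomial_symmetric[OF assms(1)] by blast
  also have "\<dots> \<le> n ^ a"
    by (rule binomial_le_pow) (use assms in auto)
  also have "\<dots> \<le> m ^ a"
    using assms(2) by (rule power_mono) simp
  finally show ?thesis .
qed

lemma obstruction_exponent_large_S:
  fixes n k t :: nat and C :: real
  assumes "1 \<le> C" "1 \<le> k" "k \<le> n" "n \<le> 2 * k" "n < k + t"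
  shows "real (n - k) + real t + 3 \<le> 8 * (C + 1) * real k * real t / real n"
proof -
  have "2 * (1 / 2) \<le> (C + 1) * (real k / real n)"
    using assms(1-4) by (intro mult_mono) (auto simp: field_simps)
  then have "1 * real t \<le> (C + 1) * (real k / real n) * real t"
    by (intro mult_right_mono) simp_all
  moreover have "real (n - k) = real n - real k" "real n + 1 \<le> real k + real t"
    using assms(3,5) by linarith+
  moreover have "8 * (C + 1) * real k * real t / real n = 8 * ((C + 1) * (real k / real n) * real t)"
    by simp
  ultimately show ?thesis
    using assms(3) by linarith
qed

lemma obstruction_exponent_large_T:
  fixes n m k t :: nat and C :: real
  assumes "1 \<le> C" "1 \<le> k" "k \<le> n" "n \<le> m" "t \<le> m" "m \<le> 2 * t"
    and deficit: "real m - real t + 1 \<le> real k * (C * real m / real n + 1)"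
  shows "real k + real (m - t) + 3 \<le> 8 * (C + 1) * real k * real t / real n"
proof -
  define r where "r = real m / real n"
  have "0 < real n" "1 \<le> r"
    using assms(2-4) by (auto simp: r_def)
  have "4 * (C * (real k * r)) + 4 * (real k * r) = 8 * (C + 1) * real k * (real m / 2) / real n"
    using \<open>0 < real n\<close> by (simp add: r_def field_simps)
  also have "\<dots> \<le> 8 * (C + 1) * real k * real t / real n"
    using assms(1,6) by (intro divide_right_mono mult_left_mono) auto
  finally have "4 * (C * (real k * r)) + 4 * (real k * r) \<le> 8 * (C + 1) * real k * real t / real n" .
  moreover have "real k \<le> real k * r" "0 \<le> C * (real k * r)"
    using \<open>1 \<le> r\<close> assms(1,2) by auto
  moreover have "real m - real t + 1 \<le> C * (real k * r) + real k"
    using deficit by (simp add: r_def algebra_simps)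
  moreover have "real (m - t) = real m - real t"
    using assms(5) by simp
  ultimately show ?thesis
    using assms(2) by linarith
qed

lemma obstruction_exponent_small:
  fixes n m k t :: nat and C :: real
  assumes "1 \<le> C" "n \<le> m" "2 * k < n" "2 * t < m" "n < k + t"
    and deficit: "real m - real t + 1 \<le> real k * (C * real m / real n + 1)"
  shows "real k + real t + 3 \<le> 8 * (C + 1) * real k * real t / real n"
proof -
  define q where "q = (C + 1) * (real k / real n)"
  define r where "r = real m / real n"
  have "1 \<le> r"
    using assms(2,3) by (simp add: r_def)
  then have "real k \<le> real k * r"
    using mult_left_mono[of 1 r "real k"] by simp
  moreover have "real m - real t + 1 \<le> C * (real k * r) + real k"
    using deficit by (simp add: r_def algebra_simps)
  ultimately have "real m < 2 * ((C + 1) * (real k * r))"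
    using assms(4) by (simp add: algebra_simps)
  also have "(C + 1) * (real k * r) = q * real m"
    by (simp add: q_def r_def)
  finally have "1 / 2 < q"
    using assms(2,3) by (simp add: field_simps)
  then have "1 / 2 * real t \<le> q * real t"
    by (intro mult_right_mono) simp_all
  moreover have "2 * real k + 1 \<le> real n" "real n + 1 \<le> real k + real t"
    using assms(3,5) by linarith+
  moreover have "8 * (C + 1) * real k * real t / real n = 8 * (q * real t)"
    by (simp add: q_def)
  ultimately show ?thesis
    by linarith
qed

text \<open>Together with n choose k \<le> m^a and m choose t \<le> m^b for these a and b, this trades the
  number of pairs (S, T) against the probability that (S, T) is an obstruction.\<close>

lemma obstruction_exponent:
  fixes n m k t :: nat and C :: real
  assumes C: "1 \<le> C" and nm: "n \<le> m" and k: "1 \<le> k" "k \<le> n" and t: "t \<le> m" and kt: "n < k + t"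
    and deficit: "real m - real t + 1 \<le> real k * (C * real m / real n + 1)"
  shows "\<exists>a\<in>{k, n - k}. \<exists>b\<in>{t, m - t}. real a + real b + 3 \<le> 8 * (C + 1) * real k * real t / real n"
proof -
  consider "n \<le> 2 * k" | "2 * k < n" "m \<le> 2 * t" | "2 * k < n" "2 * t < m"
    by linarith
  then show ?thesis
  proof cases
    case 1
    then show ?thesis
      using obstruction_exponent_large_S[OF C k 1 kt] by blast
  next
    case 2
    then show ?thesis
      using obstruction_exponent_large_T[OF C k nm t 2(2) deficit] by blast
  next
    case 3
    then show ?thesis
      using obstruction_exponent_small[OF C nm 3 kt deficit] by blast
  qed
qed

lemma binomial_product_powr_le:
  fixes n m k t :: nat and C :: real
  assumes "1 \<le> C" "n \<le> m" "1 \<le> k" "k \<le> n" "t \<le> m" "n < k + t"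
    and "real m - real t + 1 \<le> real k * (C * real m / real n + 1)"
  shows "real (n choose k) * real (m choose t)
           * real m powr (- (8 * (C + 1) * real k * real t / real n)) \<le> 1 / real m ^ 3"
proof -
  define X where "X = 8 * (C + 1) * real k * real t / real n"
  obtain a b where ab: "a \<in> {k, n - k}" "b \<in> {t, m - t}" "real a + real b + 3 \<le> X"
    using obstruction_exponent[OF assms] unfolding X_def by blast
  have m1: "1 \<le> real m"
    using assms(2-4) by simp
  have "real (n choose k) * real (m choose t) \<le> real m ^ a * real m ^ b"
    using binomial_le_power[OF assms(4,2) ab(1)] binomial_le_power[OF assms(5) order.refl ab(2)]
    by (intro mult_mono) (simp_all only: of_nat_le_iff of_nat_power[symmetric])
  also have "\<dots> = real m powr (real a + real b)"
    using m1 by (simp add: powr_add powr_realpow)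
  finally have "real (n choose k) * real (m choose t) * real m powr (- X)
      \<le> real m powr (real a + real b) * real m powr (- X)"
    by (rule mult_right_mono) simp
  also have "\<dots> = real m powr (real a + real b - X)"
    by (simp add: powr_add[symmetric])
  also have "\<dots> \<le> real m powr (- 3)"
    using m1 ab(3) by (intro powr_mono) auto
  also have "\<dots> = 1 / real m ^ 3"
    using m1 by (simp add: powr_minus_divide powr_realpow)
  finally show ?thesis
    unfolding X_def .
qed

lemma obstruction_sizes:
  fixes s :: "nat \<Rightarrow> nat" and C :: real
  assumes s: "\<forall>i<n. 1 \<le> s i" "\<forall>i<n. real (s i) \<le> C * real m / real n + 1" "sum s {..<n} \<le> m"
    and S: "S \<subseteq> {..<n}" and T: "T \<subseteq> {..<m}" and big: "m < card T + sum s S"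
  shows "1 \<le> card S" "card T \<le> m" "n < card S + card T"
    "real m - real (card T) + 1 \<le> real (card S) * (C * real m / real n + 1)"
proof -
  show T_le: "card T \<le> m"
    using card_mono[OF _ T] by simp
  have "finite S"
    using S finite_subset by blast
  moreover have "S \<noteq> {}"
    using big T_le by auto
  ultimately show "1 \<le> card S"
    by (simp add: Suc_le_eq card_gt_0_iff)
  have "card ({..<n} - S) \<le> sum s ({..<n} - S)"
    using s(1) card_eq_sum[of "{..<n} - S"] sum_mono[of "{..<n} - S" "\<lambda>_. 1" s] by auto
  moreover have "sum s S + sum s ({..<n} - S) \<le> m"
    using s(3) S by (simp add: sum.subset_diff[of S "{..<n}"])
  moreover have "card ({..<n} - S) = n - card S"
    using S by (simp add: card_Diff_subset \<open>finite S\<close>)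
  ultimately show "n < card S + card T"
    using big by linarith
  have "real m - real (card T) + 1 \<le> real (sum s S)"
    using big by linarith
  also have "\<dots> \<le> (\<Sum>i\<in>S. C * real m / real n + 1)"
    unfolding of_nat_sum using s(2) S by (intro sum_mono) auto
  finally show "real m - real (card T) + 1 \<le> real (card S) * (C * real m / real n + 1)"
    by simp
qed

lemma sum_obstruction_weights_le:
  assumes "1 \<le> n" "n \<le> m" "V \<subseteq> Pow {..<n} \<times> Pow {..<m}"
  shows "(\<Sum>(S, T)\<in>V. 1 / (real m ^ 3 * real (n choose card S) * real (m choose card T)))
           \<le> 4 / real m"
proof -
  define f where "f S = 1 / real (n choose card S)" for S :: "nat set"
  define g where "g T = 1 / real (m choose card T)" for T :: "nat set"
  have "(\<Sum>(S, T)\<in>V. 1 / (real m ^ 3 * real (n choose card S) * real (m choose card T)))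
      = (\<Sum>(S, T)\<in>V. f S * g T) / real m ^ 3"
    by (simp add: f_def g_def sum_divide_distrib case_prod_beta mult_ac)
  also have "\<dots> \<le> (\<Sum>(S, T)\<in>Pow {..<n} \<times> Pow {..<m}. f S * g T) / real m ^ 3"
    using assms(3) by (intro divide_right_mono sum_mono2) (auto simp: f_def g_def)
  also have "\<dots> = (\<Sum>S\<in>Pow {..<n}. f S) * (\<Sum>T\<in>Pow {..<m}. g T) / real m ^ 3"
    by (simp add: sum.cartesian_product[symmetric] sum_product)
  also have "\<dots> = (real n + 1) * (real m + 1) / real m ^ 3"
    using sum_Pow_inverse_binomial[of "{..<n}"] sum_Pow_inverse_binomial[of "{..<m}"]
    by (simp add: f_def g_def)
  also have "\<dots> \<le> (2 * real m) * (2 * real m) / real m ^ 3"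
    using assms(1,2) by (intro divide_right_mono mult_mono) auto
  also have "\<dots> = 4 / real m"
    by (simp add: power3_eq_cube)
  finally show ?thesis .
qed

section \<open>Random threshold graphs\<close>

lemma sets_PiM_all_in:
  assumes "J \<subseteq> I" "finite J" "A \<in> sets D"
  shows "{u \<in> space (PiM I (\<lambda>_. D)). \<forall>j\<in>J. u j \<in> A} \<in> sets (PiM I (\<lambda>_. D))"
  using assms by (auto intro!: sets.sets_Collect_finite_All sets_Collect_single)

lemma measure_PiM_all_in:
  assumes "prob_space D" "J \<subseteq> I" "finite J" "A \<in> sets D"
  shows "measure (PiM I (\<lambda>_. D)) {u \<in> space (PiM I (\<lambda>_. D)). \<forall>j\<in>J. u j \<in> A} = measure D A ^ card J"
proof -
  interpret D: prob_space D
    by (rule assms(1))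
  interpret product_prob_space "\<lambda>_. D" I
    by unfold_locales
  have "emeasure (PiM I (\<lambda>_. D)) {u \<in> space (PiM I (\<lambda>_. D)). \<forall>j\<in>J. u j \<in> A}
      = ennreal (measure D A ^ card J)"
    using emeasure_PiM_Collect[of J "\<lambda>_. A"] assms(2-4)
    by (simp add: D.emeasure_eq_measure ennreal_power)
  then show ?thesis
    by (simp add: emeasure_eq_measure)
qed

lemma threshold_graph_eq: "threshold_graph n m u \<tau> = {ij \<in> {..<n} \<times> {..<m}. \<tau> \<le> u ij}"
  by (auto simp: threshold_graph_def)

lemma threshold_graph_event_measurable:
  fixes D :: "real measure"
  assumes [measurable_cong]: "sets D = sets borel"
  shows "{u \<in> space (PiM ({..<n} \<times> {..<m}) (\<lambda>_. D)). Q (threshold_graph n m u \<tau>)}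
           \<in> sets (PiM ({..<n} \<times> {..<m}) (\<lambda>_. D))"
proof -
  define I where "I = {..<n} \<times> {..<m}"
  have "Q {ij \<in> I. \<tau> \<le> u ij} \<longleftrightarrow> (\<exists>G\<in>{G \<in> Pow I. Q G}. \<forall>ij\<in>I. (\<tau> \<le> u ij) = (ij \<in> G))" for u
  proof
    assume "\<exists>G\<in>{G \<in> Pow I. Q G}. \<forall>ij\<in>I. (\<tau> \<le> u ij) = (ij \<in> G)"
    then obtain G where "G \<subseteq> I" "Q G" "\<forall>ij\<in>I. (\<tau> \<le> u ij) = (ij \<in> G)"
      by auto
    moreover from this have "{ij \<in> I. \<tau> \<le> u ij} = G"
      by auto
    ultimately show "Q {ij \<in> I. \<tau> \<le> u ij}"
      by simp
  next
    assume "Q {ij \<in> I. \<tau> \<le> u ij}"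
    then show "\<exists>G\<in>{G \<in> Pow I. Q G}. \<forall>ij\<in>I. (\<tau> \<le> u ij) = (ij \<in> G)"
      by (intro bexI[of _ "{ij \<in> I. \<tau> \<le> u ij}"]) auto
  qed
  moreover have "{u \<in> space (PiM I (\<lambda>_. D)). \<exists>G\<in>{G \<in> Pow I. Q G}. \<forall>ij\<in>I. (\<tau> \<le> u ij) = (ij \<in> G)}
      \<in> sets (PiM I (\<lambda>_. D))"
    unfolding I_def by measurable
  ultimately show ?thesis
    unfolding threshold_graph_eq I_def by simp
qed

lemma prob_no_threshold_edges_le:
  fixes D :: "real measure"
  assumes "prob_space D" "sets D = sets borel" "S \<times> T \<subseteq> I" "finite S" "finite T"
    and "measure D {..<\<tau>} \<le> 1 - p"
  shows "measure (PiM I (\<lambda>_. D)) {u \<in> space (PiM I (\<lambda>_. D)). \<forall>ij\<in>S \<times> T. u ij < \<tau>}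
           \<le> exp (- p * real (card S) * real (card T))"
proof -
  have "measure (PiM I (\<lambda>_. D)) {u \<in> space (PiM I (\<lambda>_. D)). \<forall>ij\<in>S \<times> T. u ij < \<tau>}
      = measure D {..<\<tau>} ^ (card S * card T)"
    using measure_PiM_all_in[of D "S \<times> T" I "{..<\<tau>}"] assms(1-5)
    by (simp add: card_cartesian_product)
  also have "\<dots> \<le> exp (- p) ^ (card S * card T)"
    using assms(6) exp_ge_add_one_self[of "- p"] by (intro power_mono) auto
  also have "\<dots> = exp (- p * real (card S) * real (card T))"
    by (simp add: exp_of_nat_mult[symmetric] algebra_simps)
  finally show ?thesis .
qed

lemma measure_lessThan_le_of_density_ge:
  fixes f :: "real \<Rightarrow> real"
  assumes D: "prob_space D" "D = density lborel (\<lambda>x. ennreal (f x * indicator {0..1} x))"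
    and f: "f \<in> borel_measurable borel" "\<forall>x\<in>{0..1}. \<alpha> \<le> f x"
    and \<tau>: "0 \<le> \<tau>" "\<tau> \<le> 1"
  shows "measure D {..<\<tau>} \<le> 1 - \<alpha> * (1 - \<tau>)"
proof -
  interpret D: prob_space D
    by (rule D(1))
  have "ennreal (\<alpha> * (1 - \<tau>)) \<le> (\<integral>\<^sup>+x. ennreal \<alpha> * indicator {\<tau>..1} x \<partial>lborel)"
    using \<tau> by (cases "0 \<le> \<alpha>")
      (simp_all add: nn_integral_cmult_indicator ennreal_mult ennreal_neg mult_nonpos_nonneg)
  also have "\<dots> \<le> (\<integral>\<^sup>+x. ennreal (f x * indicator {0..1} x) * indicator {\<tau>..} x \<partial>lborel)"
    using f(2) \<tau> by (intro nn_integral_mono) (auto simp: indicator_def intro!: ennreal_leI)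
  also have "\<dots> = emeasure D {\<tau>..}"
    unfolding D(2) by (rule emeasure_density[symmetric]) (use f(1) in auto)
  finally have "\<alpha> * (1 - \<tau>) \<le> measure D {\<tau>..}"
    by (simp add: D.emeasure_eq_measure ennreal_le_iff)
  moreover have "measure D {..<\<tau>} = 1 - measure D {\<tau>..}"
    using D.prob_compl[of "{\<tau>..}"] D(2) by (simp add: Compl_eq_Diff_UNIV[symmetric] not_le)
  ultimately show ?thesis
    by simp
qed

lemma threshold_graph_obstruction:
  assumes "\<nexists>F. left_saturating_s_matching (threshold_graph n m u \<tau>) {..<n} {..<m} s F"
  obtains S T where "S \<subseteq> {..<n}" "T \<subseteq> {..<m}" "m < card T + sum s S" "\<forall>ij\<in>S \<times> T. u ij < \<tau>"
proof -
  obtain S T where ST: "S \<subseteq> {..<n}" "T \<subseteq> {..<m}" "m < card T + sum s S"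
      "\<forall>i\<in>S. \<forall>g\<in>T. (i, g) \<notin> threshold_graph n m u \<tau>"
    using obstruction_of_not_left_saturating_s_matching[OF finite_lessThan finite_lessThan assms]
    unfolding card_lessThan by blast
  moreover have "\<forall>ij\<in>S \<times> T. u ij < \<tau>"
    using ST(1,2,4) by (fastforce simp: threshold_graph_def not_le)
  ultimately show ?thesis
    using that by blast
qed

lemma prob_obstruction_le:
  fixes n m :: nat and D :: "real measure" and s :: "nat \<Rightarrow> nat" and C \<tau> :: real
  assumes D: "prob_space D" "sets D = sets borel"
    and tail: "measure D {..<\<tau>} \<le> 1 - 8 * (C + 1) * ln (real m) / real n"
    and s: "\<forall>i<n. 1 \<le> s i" "\<forall>i<n. real (s i) \<le> C * real m / real n + 1" "sum s {..<n} \<le> m"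
    and C: "1 \<le> C" and nm: "n \<le> m"
    and S: "S \<subseteq> {..<n}" and T: "T \<subseteq> {..<m}" and big: "m < card T + sum s S"
  shows "measure (PiM ({..<n} \<times> {..<m}) (\<lambda>_. D))
           {u \<in> space (PiM ({..<n} \<times> {..<m}) (\<lambda>_. D)). \<forall>ij\<in>S \<times> T. u ij < \<tau>}
         \<le> 1 / (real m ^ 3 * real (n choose card S) * real (m choose card T))"
proof -
  note sizes = obstruction_sizes[OF s S T big]
  have "card S \<le> n"
    using card_mono[OF _ S] by simp
  have "measure (PiM ({..<n} \<times> {..<m}) (\<lambda>_. D))
           {u \<in> space (PiM ({..<n} \<times> {..<m}) (\<lambda>_. D)). \<forall>ij\<in>S \<times> T. u ij < \<tau>}
        \<le> exp (- (8 * (C + 1) * ln (real m) / real n) * real (card S) * real (card T))"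
    using S T finite_subset[OF S finite_lessThan] finite_subset[OF T finite_lessThan]
    by (intro prob_no_threshold_edges_le[OF D _ _ _ tail]) auto
  also have "\<dots> = real m powr (- (8 * (C + 1) * real (card S) * real (card T) / real n))"
    using sizes(1) \<open>card S \<le> n\<close> nm by (simp add: powr_def)
  also have "\<dots> \<le> 1 / real m ^ 3 / (real (n choose card S) * real (m choose card T))"
    using binomial_product_powr_le[OF C nm sizes(1) \<open>card S \<le> n\<close> sizes(2,3,4)]
      \<open>card S \<le> n\<close> sizes(2)
    by (subst pos_le_divide_eq) (auto simp: mult_ac)
  finally show ?thesis
    by (simp add: mult.assoc)
qed

theorem prob_threshold_graph_left_saturating_s_matching:
  fixes n m :: nat and D :: "real measure" and s :: "nat \<Rightarrow> nat" and C \<tau> :: real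
  defines "P \<equiv> PiM ({..<n} \<times> {..<m}) (\<lambda>_. D)"
  assumes D: "prob_space D" "sets D = sets borel"
    and tail: "measure D {..<\<tau>} \<le> 1 - 8 * (C + 1) * ln (real m) / real n"
    and s: "\<forall>i<n. 1 \<le> s i" "\<forall>i<n. real (s i) \<le> C * real m / real n + 1" "sum s {..<n} \<le> m"
    and C: "1 \<le> C" and n: "1 \<le> n" "n \<le> m"
  shows "1 - 4 / real m \<le> measure P
           {u \<in> space P.
              \<exists>F. left_saturating_s_matching (threshold_graph n m u \<tau>) {..<n} {..<m} s F}"
    (is "_ \<le> measure P ?good")
proof -
  interpret P: prob_space P
    unfolding P_def by (intro prob_space_PiM D(1))
  define V where "V = {(S, T). S \<subseteq> {..<n} \<and> T \<subseteq> {..<m} \<and> m < card T + sum s S}"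
  define no_edges where "no_edges = (\<lambda>(S, T). {u \<in> space P. \<forall>ij\<in>S \<times> T. u ij < \<tau>})"
  have V: "V \<subseteq> Pow {..<n} \<times> Pow {..<m}" "finite V"
    by (auto simp: V_def intro: finite_subset[of _ "Pow {..<n} \<times> Pow {..<m}"])
  have good: "?good \<in> P.events"
    unfolding P_def by (rule threshold_graph_event_measurable[OF D(2)])
  have no_edges: "no_edges ST \<in> P.events" if "ST \<in> V" for ST
  proof -
    obtain S T where ST: "ST = (S, T)" "S \<subseteq> {..<n}" "T \<subseteq> {..<m}"
      using \<open>ST \<in> V\<close> by (auto simp: V_def)
    then have "finite (S \<times> T)"
      using finite_subset by blast
    then show ?thesis
      using sets_PiM_all_in[of "S \<times> T" "{..<n} \<times> {..<m}" "{..<\<tau>}" D] ST D(2)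
      by (auto simp: no_edges_def P_def)
  qed
  have "space P - ?good \<subseteq> (\<Union>ST\<in>V. no_edges ST)"
  proof
    fix u assume u: "u \<in> space P - ?good"
    then have "\<nexists>F. left_saturating_s_matching (threshold_graph n m u \<tau>) {..<n} {..<m} s F"
      by blast
    then obtain S T where "S \<subseteq> {..<n}" "T \<subseteq> {..<m}" "m < card T + sum s S" "\<forall>ij\<in>S \<times> T. u ij < \<tau>"
      by (rule threshold_graph_obstruction)
    then show "u \<in> (\<Union>ST\<in>V. no_edges ST)"
      using u by (intro UN_I[of "(S, T)"]) (auto simp: V_def no_edges_def)
  qed
  then have "measure P (space P - ?good) \<le> measure P (\<Union>ST\<in>V. no_edges ST)"
    using no_edges V by (intro P.finite_measure_mono) auto
  also have "\<dots> \<le> (\<Sum>ST\<in>V. measure P (no_edges ST))"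
    using no_edges V by (intro P.finite_measure_subadditive_finite) auto
  also have "\<dots> \<le> (\<Sum>(S, T)\<in>V. 1 / (real m ^ 3 * real (n choose card S) * real (m choose card T)))"
  proof (rule sum_mono, clarify)
    fix S T assume "(S, T) \<in> V"
    then show "measure P (no_edges (S, T))
        \<le> 1 / (real m ^ 3 * real (n choose card S) * real (m choose card T))"
      unfolding P_def no_edges_def prod.case
      by (intro prob_obstruction_le[OF D tail s C n(2)]) (auto simp: V_def)
  qed
  also have "\<dots> \<le> 4 / real m"
    by (rule sum_obstruction_weights_le[OF n V(1)])
  finally show ?thesis
    using P.prob_compl[OF good] by simp
qed

section \<open>The parameters \<tau> and s\<close>

lemma real_nat_ceiling_less: "0 \<le> x \<Longrightarrow> real (nat \<lceil>x\<rceil>) < x + 1"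
  using ceiling_correct[of x] by simp

lemma weight_share_le:
  fixes w :: "'a \<Rightarrow> real"
  assumes A: "finite A" "i \<in> A" and w: "\<forall>j\<in>A. 0 < w j" "Max (w ` A) / Min (w ` A) \<le> C"
  shows "w i / sum w A \<le> C / real (card A)"
proof -
  have "A \<noteq> {}"
    using A(2) by blast
  then have Min_pos: "0 < Min (w ` A)"
    using A(1) w(1) by simp
  have "w i \<le> Max (w ` A)"
    using A by simp
  also have "\<dots> \<le> C * Min (w ` A)"
    using w(2) Min_pos by (simp add: divide_le_eq)
  finally have wi: "w i \<le> C * Min (w ` A)" .
  then have "0 < C"
    using w(1) A(2) Min_pos by (smt (verit) zero_less_mult_iff)
  have "w i * real (card A) \<le> C * Min (w ` A) * real (card A)"
    using wi by (rule mult_right_mono) simp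
  also have "\<dots> = C * (\<Sum>j\<in>A. Min (w ` A))"
    by simp
  also have "\<dots> \<le> C * sum w A"
    using \<open>0 < C\<close> A(1) by (intro mult_left_mono sum_mono) auto
  finally have "w i * real (card A) \<le> C * sum w A" .
  moreover have "0 < sum w A" "0 < real (card A)"
    using A w(1) by (auto intro: sum_pos simp: card_gt_0_iff)
  ultimately show ?thesis
    by (simp add: divide_simps mult_ac)
qed

lemma s_param_eq:
  assumes "tau_param \<alpha> C n m \<noteq> 0" "\<mu> \<noteq> 0" "1 + \<epsilon> \<noteq> 0"
  shows "s_param \<alpha> C \<epsilon> \<mu> n m w i = nat \<lceil>(\<mu> + \<epsilon>) / (1 + \<epsilon>) * real m * (w i / (\<Sum>j<n. w j))\<rceil>"
proof -
  define t where "t = tau_param \<alpha> C n m"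
  have "(1 + \<epsilon> / (1 + \<epsilon>) * ((1 - \<mu>) / \<mu>)) * \<mu> = (\<mu> + \<epsilon>) / (1 + \<epsilon>)"
    using assms(2,3) by (simp add: divide_simps) (simp add: algebra_simps)
  then have factor: "(1 + delta_param \<epsilon> \<mu> t) * (\<mu> / t) = (\<mu> + \<epsilon>) / (1 + \<epsilon>)"
    using assms(1) by (simp add: t_def delta_param_def)
  have "(1 + delta_param \<epsilon> \<mu> t) * (w i / (\<Sum>j<n. w j)) * (\<mu> * real m / t)
      = (1 + delta_param \<epsilon> \<mu> t) * (\<mu> / t) * real m * (w i / (\<Sum>j<n. w j))"
    by (simp add: divide_inverse mult_ac)
  then show ?thesis
    unfolding s_param_def Let_def t_def[symmetric] factor by simp
qed

lemma nat_ceiling_share_bounds: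
  fixes w :: "'a \<Rightarrow> real"
  assumes A: "finite A" and w: "\<forall>i\<in>A. 0 < w i" "Max (w ` A) / Min (w ` A) \<le> C" and c: "0 < c"
  shows "\<forall>i\<in>A. 1 \<le> nat \<lceil>c * (w i / sum w A)\<rceil>"
    "\<forall>i\<in>A. real (nat \<lceil>c * (w i / sum w A)\<rceil>) \<le> C * c / real (card A) + 1"
    "real (\<Sum>i\<in>A. nat \<lceil>c * (w i / sum w A)\<rceil>) \<le> c + real (card A)"
proof -
  have share_pos: "0 < c * (w i / sum w A)" if "i \<in> A" for i
  proof -
    have "0 < sum w A"
      using A w(1) that by (intro sum_pos) auto
    then show ?thesis
      using c w(1) that by simp
  qed
  then show "\<forall>i\<in>A. 1 \<le> nat \<lceil>c * (w i / sum w A)\<rceil>"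
    by (simp add: Suc_le_eq)
  show "\<forall>i\<in>A. real (nat \<lceil>c * (w i / sum w A)\<rceil>) \<le> C * c / real (card A) + 1"
  proof
    fix i assume "i \<in> A"
    then have "c * (w i / sum w A) \<le> c * (C / real (card A))"
      using weight_share_le[OF A _ w] c by (intro mult_left_mono) auto
    then show "real (nat \<lceil>c * (w i / sum w A)\<rceil>) \<le> C * c / real (card A) + 1"
      using real_nat_ceiling_less share_pos[OF \<open>i \<in> A\<close>]
      by (smt (verit) times_divide_eq_right mult.commute)
  qed
  have "real (\<Sum>i\<in>A. nat \<lceil>c * (w i / sum w A)\<rceil>) \<le> (\<Sum>i\<in>A. c * (w i / sum w A) + 1)"
    unfolding of_nat_sum using real_nat_ceiling_less share_pos
    by (intro sum_mono) (simp add: less_imp_le)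
  also have "\<dots> \<le> c + real (card A)"
  proof (cases "A = {}")
    case False
    then have "0 < sum w A"
      using A w(1) by (intro sum_pos) auto
    then show ?thesis
      by (simp add: sum.distrib sum_distrib_left[symmetric] sum_divide_distrib[symmetric])
  qed (use c in simp)
  finally show "real (\<Sum>i\<in>A. nat \<lceil>c * (w i / sum w A)\<rceil>) \<le> c + real (card A)" .
qed

lemma s_param_bounds:
  assumes w: "\<forall>i<n. 0 < w i" "Max (w ` {..<n}) / Min (w ` {..<n}) \<le> C"
    and m: "(1 + \<epsilon>) * real n / (1 - \<mu>) \<le> real m" and \<mu>: "0 < \<mu>" "\<mu> < 1" and \<epsilon>: "0 < \<epsilon>"
    and \<tau>: "tau_param \<alpha> C n m \<noteq> 0" and n: "1 \<le> n" and C: "1 \<le> C"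
  shows "\<forall>i<n. 1 \<le> s_param \<alpha> C \<epsilon> \<mu> n m w i"
    "\<forall>i<n. real (s_param \<alpha> C \<epsilon> \<mu> n m w i) \<le> C * real m / real n + 1"
    "sum (s_param \<alpha> C \<epsilon> \<mu> n m w) {..<n} \<le> m"
proof -
  define q where "q = (\<mu> + \<epsilon>) / (1 + \<epsilon>)"
  have s: "s_param \<alpha> C \<epsilon> \<mu> n m w = (\<lambda>i. nat \<lceil>(q * real m) * (w i / sum w {..<n})\<rceil>)"
    using s_param_eq[OF \<tau>] \<mu> \<epsilon> by (intro ext) (simp add: q_def mult.assoc)
  have q: "0 < q" "q \<le> 1"
    using \<mu> \<epsilon> by (auto simp: q_def)
  have n_le: "real n \<le> (1 - q) * real m"
    using m \<mu> \<epsilon> by (simp add: q_def field_simps)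
  then have "0 < q * real m"
    using n q by (cases m) auto
  note bounds = nat_ceiling_share_bounds[of "{..<n}" w C, OF _ _ w(2) this]
  show "\<forall>i<n. 1 \<le> s_param \<alpha> C \<epsilon> \<mu> n m w i"
    using bounds(1) w(1) by (simp add: s)
  have "C * (q * real m) / real n \<le> C * real m / real n"
    using q C by (intro divide_right_mono mult_left_mono) (auto intro: mult_left_le_one_le)
  then show "\<forall>i<n. real (s_param \<alpha> C \<epsilon> \<mu> n m w i) \<le> C * real m / real n + 1"
    using bounds(2) w(1) by (force simp: s)
  have "real (sum (s_param \<alpha> C \<epsilon> \<mu> n m w) {..<n}) \<le> real m"
    using bounds(3) w(1) n_le by (simp add: s algebra_simps)
  then show "sum (s_param \<alpha> C \<epsilon> \<mu> n m w) {..<n} \<le> m"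
    by (simp only: of_nat_le_iff)
qed

lemma tau_param_bounds:
  assumes "0 < \<alpha>" "1 \<le> C" "1 \<le> n" "1 \<le> m" "8 * (C + 1) * ln (real m) < \<alpha> * real n"
  shows "0 < tau_param \<alpha> C n m" "tau_param \<alpha> C n m \<le> 1"
    "\<alpha> * (1 - tau_param \<alpha> C n m) = 8 * (C + 1) * ln (real m) / real n"
  using assms by (simp_all add: tau_param_def field_simps)

lemma real_le_max_mult_square:
  assumes "real m \<le> K * real n * ln (real n)" "1 \<le> n"
  shows "real m \<le> max K 1 * real n ^ 2"
proof -
  have ln: "0 \<le> ln (real n)" "ln (real n) \<le> real n"
    using assms(2) ln_le_minus_one[of "real n"] by auto
  have "K * real n * ln (real n) \<le> max K 1 * real n * ln (real n)"
    using ln by (intro mult_right_mono) auto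
  also have "\<dots> \<le> max K 1 * real n * real n"
    using ln by (intro mult_left_mono) auto
  finally show ?thesis
    using assms(1) by (simp add: power2_eq_square mult.assoc)
qed

lemma prob_threshold_graph_s_param_matching:
  fixes D :: "real measure" and f :: "real \<Rightarrow> real" and w :: "nat \<Rightarrow> real" and n m :: nat
  assumes D: "prob_space D" "D = density lborel (\<lambda>x. ennreal (f x * indicator {0..1} x))"
      "f \<in> borel_measurable borel"
    and \<alpha>: "0 < \<alpha>" "\<forall>x\<in>{0..1}. \<alpha> \<le> f x"
    and \<mu>: "0 < \<mu>" "\<mu> < 1" and C: "1 \<le> C" and \<epsilon>: "0 < \<epsilon>"
    and n: "1 \<le> n" and ln_n: "8 * (C + 1) * ln (max K 1 * real n ^ 2) < \<alpha> * real n"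
    and w: "\<forall>i<n. 0 < w i" "Max (w ` {..<n}) / Min (w ` {..<n}) \<le> C"
    and m: "(1 + \<epsilon>) * real n / (1 - \<mu>) \<le> real m" "real m \<le> K * real n * ln (real n)"
    and \<eta>: "4 / real n \<le> \<eta>"
  shows "1 - \<eta> \<le> measure (PiM ({..<n} \<times> {..<m}) (\<lambda>_. D))
           {u \<in> space (PiM ({..<n} \<times> {..<m}) (\<lambda>_. D)).
              \<exists>F. left_saturating_s_matching (threshold_graph n m u (tau_param \<alpha> C n m))
                    {..<n} {..<m} (s_param \<alpha> C \<epsilon> \<mu> n m w) F}"
proof -
  have "real n \<le> (1 + \<epsilon>) * real n / (1 - \<mu>)"
    using \<mu> \<epsilon> by (simp add: field_simps)
  then have nm: "n \<le> m"
    using m(1) by linarith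
  then have "ln (real m) \<le> ln (max K 1 * real n ^ 2)"
    using n real_le_max_mult_square[OF m(2) n] by simp
  then have ln_m: "8 * (C + 1) * ln (real m) < \<alpha> * real n"
    using ln_n C by (smt (verit) mult_left_mono)
  note \<tau> = tau_param_bounds[OF \<alpha>(1) C n order.trans[OF n nm] ln_m]
  have "measure D {..<tau_param \<alpha> C n m} \<le> 1 - 8 * (C + 1) * ln (real m) / real n"
    using measure_lessThan_le_of_density_ge[OF D \<alpha>(2) less_imp_le[OF \<tau>(1)] \<tau>(2)] \<tau>(3) by simp
  from prob_threshold_graph_left_saturating_s_matching[OF D(1) _ this
      s_param_bounds[OF w m(1) \<mu> \<epsilon> less_imp_neq[OF \<tau>(1), symmetric] n C] C n nm]
  moreover have "4 / real m \<le> 4 / real n"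
    using n nm by (intro divide_left_mono) auto
  ultimately show ?thesis
    using D(2) \<eta> by simp
qed

lemma eventually_size_conditions:
  fixes \<alpha> K \<eta> c :: real
  assumes "0 < \<alpha>" "0 < K" "0 < \<eta>"
  shows "\<forall>\<^sub>F n in sequentially. 1 \<le> n \<and> c * ln (K * real n ^ 2) < \<alpha> * real n \<and> 4 / real n \<le> \<eta>"
proof -
  have "\<forall>\<^sub>F n in sequentially. c * ln (K * real n ^ 2) < \<alpha> * real n"
    using assms(1,2) by real_asymp
  moreover have "\<forall>\<^sub>F n in sequentially. 4 / real n \<le> \<eta>"
    using assms(3) by real_asymp
  ultimately show ?thesis
    using eventually_ge_at_top[of 1] by eventually_elim auto
qed

theorem lemma5:
  fixes D :: "real measure" and f :: "real \<Rightarrow> real"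
    and \<alpha> \<beta> \<mu> C \<epsilon> K :: real
  assumes "prob_space D"
    and "D = density lborel (\<lambda>x. ennreal (f x * indicator {0..1} x))"
    and "f \<in> borel_measurable borel"
    and "0 < \<alpha>"
    and "\<forall>x\<in>{0..1}. \<alpha> \<le> f x \<and> f x \<le> \<beta>"
    and "\<mu> = (\<integral>x. x \<partial>D)"
    and "0 < \<mu>" and "\<mu> < 1"
    and "1 \<le> C"
    and "0 < \<epsilon>" and "\<epsilon> < 1"
  shows "\<forall>\<eta>>0. \<exists>N0::nat. \<forall>n\<ge>N0. \<forall>(m::nat) (w::nat \<Rightarrow> real).
           ((\<forall>i<n. 0 < w i)
            \<and> Max (w ` {..<n}) / Min (w ` {..<n}) \<le> C
            \<and> (1 + \<epsilon>) * real n / (1 - \<mu>) \<le> real m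
            \<and> real m \<le> K * real n * ln (real n))
           \<longrightarrow> measure (PiM ({..<n} \<times> {..<m}) (\<lambda>_. D))
                 {u \<in> space (PiM ({..<n} \<times> {..<m}) (\<lambda>_. D)).
                    \<exists>F. left_saturating_s_matching
                          (threshold_graph n m u (tau_param \<alpha> C n m)) {..<n} {..<m}
                          (s_param \<alpha> C \<epsilon> \<mu> n m w) F}
               \<ge> 1 - \<eta>"
proof -
  have "\<forall>x\<in>{0..1}. \<alpha> \<le> f x"
    using assms(5) by blast
  note prob = prob_threshold_graph_s_param_matching[OF assms(1-4) this assms(7-10)]
  show ?thesis
  proof (intro allI impI, goal_cases)
    case (1 \<eta>)
    then obtain N0 :: nat where N0: "\<forall>n\<ge>N0. 1 \<le> n
        \<and> 8 * (C + 1) * ln (max K 1 * real n ^ 2) < \<alpha> * real n \<and> 4 / real n \<le> \<eta>"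
      using eventually_size_conditions[OF assms(4) _ 1, of "max K 1" "8 * (C + 1)"]
      unfolding eventually_sequentially by (auto simp: less_max_iff_disj)
    show ?case
    proof (intro exI[of _ N0] allI impI, goal_cases)
      case (1 n m w)
      with N0 show ?case
        by (blast intro: prob)
    qed
  qed
qed

end
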